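(* Let $q=2^h$ with $h\equiv 1\pmod 2$, and let $$U=\left\{\left(x,y,x^q+y^{q^2},x^{q^2}+y^q+y^{q^2}\right): x,y\in\mathbb F_{q^4}\right\},\qquad U'=\left\{\left(z,t,z^{q^3}+z^{q^2}+t^{q^2},z^{q^2}+t^{q^3}\right): z,t\in\mathbb F_{q^4}\right\}.$$ Then $U$ and $U'$ are $\mathrm{GL}(4,q^4)$-equivalent, i.e. there exists $A\in\mathrm{GL}(4,q^4)$ with $\{uA: u\in U\}=U'$.
   Context: $U'$ is the orthogonal complement $U^{\tau'}$ of $U$ with respect to the $\mathbb F_q$-bilinear form $\sigma'(X,Y)=\mathrm{Tr}_{q^4/q}(X_0Y_3+X_3Y_0-X_1Y_2-X_2Y_1)$ on $\mathbb F_{q^4}^4$, where $\mathrm{Tr}_{q^4/q}$ is the trace map from $\mathbb F_{q^4}$ to $\mathbb F_q$. *)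

theory Defs
  imports "HOL-Analysis.Analysis"
begin

definition U_set :: "nat \<Rightarrow> (('a::{field,finite}) ^ 4) set" where
  "U_set q = {vector [x, y, x ^ q + y ^ (q^2), x ^ (q^2) + y ^ q + y ^ (q^2)] | x y. True}"

definition U'_set :: "nat \<Rightarrow> (('a::{field,finite}) ^ 4) set" where
  "U'_set q = {vector [z, t, z ^ (q^3) + z ^ (q^2) + t ^ (q^2), z ^ (q^2) + t ^ (q^3)] | z t. True}"

end

theory Submission
  imports Defs "HOL-Number_Theory.Residues"
begin

text \<open>
  Write \<open>F x = x^q\<close>. Since \<open>q\<close> is a power of the characteristic \<open>2\<close>, \<open>F\<close> is additive, and
  \<open>F\<^sup>4 = id\<close> on the field with \<open>q^4\<close> elements. A \<open>0/1\<close>-matrix whose inverse is again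
  a \<open>0/1\<close>-matrix in characteristic \<open>2\<close> maps the first parametrization onto the second after
  the additive change of parameters \<open>z = y + F x + F\<^sup>2 y\<close>, \<open>t = x + F x + F\<^sup>2 x + F y\<close>; only
  additivity, \<open>F\<^sup>4 = id\<close> and \<open>2 = 0\<close> are needed to check this.
\<close>

lemma vector_4 [simp]:
  "(vector [a, b, c, d] :: ('a::zero)^4) $ 1 = a"
  "(vector [a, b, c, d] :: ('a::zero)^4) $ 2 = b"
  "(vector [a, b, c, d] :: ('a::zero)^4) $ 3 = c"
  "(vector [a, b, c, d] :: ('a::zero)^4) $ 4 = d"
  unfolding vector_def by simp_all

definition nonzero_mult_group :: "('a::field) monoid" where
  "nonzero_mult_group = \<lparr>carrier = - {0}, monoid.mult = (*), one = 1\<rparr>"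

lemma group_nonzero_mult_group: "group nonzero_mult_group"
  by (rule groupI)
    (auto simp: nonzero_mult_group_def mult.assoc,
     metis ComplI left_inverse singletonD inverse_nonzero_iff_nonzero)

lemma nat_pow_nonzero_mult_group: "x [^]\<^bsub>nonzero_mult_group\<^esub> (n::nat) = x ^ n"
  by (induction n) (simp_all add: nonzero_mult_group_def)

text \<open>The library's \<open>finite_field_power_card_eq_same\<close> needs the sort \<open>finite_field\<close>,
  which a type of sort \<open>{field, finite}\<close> cannot be shown to have inside a proof.\<close>

lemma power_card_eq_same:
  fixes x :: "'a::{field,finite}"
  shows "x ^ CARD('a) = x"
proof (cases "x = 0")
  case False
  have "Coset.order (nonzero_mult_group :: 'a monoid) = CARD('a) - 1"
    by (simp add: Coset.order_def nonzero_mult_group_def Compl_eq_Diff_UNIV card_Diff_singleton)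
  moreover have "x [^]\<^bsub>nonzero_mult_group\<^esub> Coset.order (nonzero_mult_group :: 'a monoid) = 1"
    using group.pow_order_eq_1[OF group_nonzero_mult_group, of x] False
    by (simp add: nonzero_mult_group_def)
  ultimately have "x ^ (CARD('a) - 1) = 1"
    by (simp add: nat_pow_nonzero_mult_group)
  then show ?thesis
    by (metis finite_UNIV_card_ge_0 finite power_eq_if mult.commute mult_1 not_gr0)
qed simp

lemma CHAR_eq_prime_if_card_eq_power:
  assumes "CARD('a::{field,finite}) = p ^ n" "prime p" "n > 0"
  shows "CHAR('a) = p"
proof -
  have prime_char: "prime CHAR('a)"
    using prime_CHAR_semidom[where ?'a = 'a] finite_imp_CHAR_pos[where ?'a = 'a] by auto
  have "CHAR('a) dvd p ^ n"
    using CHAR_dvd_CARD[where ?'a = 'a] assms(1) by simp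
  then have "CHAR('a) dvd p"
    using prime_char prime_dvd_power by blast
  then show ?thesis
    using prime_char assms(2) primes_dvd_imp_eq by blast
qed

definition U_point :: "('a \<Rightarrow> 'a) \<Rightarrow> 'a \<Rightarrow> 'a \<Rightarrow> ('a::comm_ring_1)^4" where
  "U_point F x y = vector [x, y, F x + F (F y), F (F x) + F y + F (F y)]"

definition U'_point :: "('a \<Rightarrow> 'a) \<Rightarrow> 'a \<Rightarrow> 'a \<Rightarrow> ('a::comm_ring_1)^4" where
  "U'_point F z t = vector [z, t, F (F (F z)) + F (F z) + F (F t), F (F z) + F (F (F t))]"

lemma U_set_eq_range_U_point:
  "U_set q = {U_point (\<lambda>x. x ^ q) x y | x y. True}"
  by (simp add: U_set_def U_point_def power_mult power2_eq_square)

lemma U'_set_eq_range_U'_point: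
  "U'_set q = {U'_point (\<lambda>x. x ^ q) z t | z t. True}"
  by (simp add: U'_set_def U'_point_def power_mult power2_eq_square power3_eq_cube)

definition U_to_U'_matrix :: "('a::comm_ring_1)^4^4" where
  "U_to_U'_matrix =
     vector [vector [0,1,0,1], vector [1,0,1,0], vector [1,1,0,1], vector [0,1,1,0]]"

definition U'_to_U_matrix :: "('a::comm_ring_1)^4^4" where
  "U'_to_U_matrix =
     vector [vector [1,0,1,0], vector [1,1,1,1], vector [1,1,1,0], vector [0,1,1,1]]"

lemma U_to_U'_matrix_inverse:
  assumes "(2::'a::comm_ring_1) = 0"
  shows "(U_to_U'_matrix :: 'a^4^4) ** U'_to_U_matrix = mat 1"
    and "(U'_to_U_matrix :: 'a^4^4) ** U_to_U'_matrix = mat 1"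
  using assms
  by (simp_all add: U_to_U'_matrix_def U'_to_U_matrix_def vec_eq_iff forall_4
      matrix_matrix_mult_def sum_4 mat_def one_add_one)

lemma invertible_U_to_U'_matrix:
  assumes "(2::'a::comm_ring_1) = 0"
  shows "invertible (U_to_U'_matrix :: 'a^4^4)"
  using U_to_U'_matrix_inverse[OF assms] invertible_def by blast

context
  fixes F :: "'a::comm_ring_1 \<Rightarrow> 'a"
  assumes char_2: "(2::'a) = 0"
    and additive: "\<And>a b. F (a + b) = F a + F b"
    and order_4: "\<And>x. F (F (F (F x))) = x"
begin

lemma add_self_char_2: "a + a = (0::'a)"
  by (metis mult_2 char_2 mult_zero_left)

lemma add_cancel_char_2: "a + (a + b) = (b::'a)"
  by (simp add: add.assoc[symmetric] add_self_char_2)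

lemmas char_2_simps =
  additive order_4 add_self_char_2 add_cancel_char_2 add.assoc add.commute add.left_commute

lemma U_point_times_U_to_U'_matrix:
  "U_point F x y v* U_to_U'_matrix =
     U'_point F (y + F x + F (F y)) (x + F x + F (F x) + F y)"
  by (simp add: U_point_def U'_point_def U_to_U'_matrix_def vec_eq_iff forall_4
      vector_matrix_mult_def sum_4 char_2_simps)

lemma U'_point_times_U'_to_U_matrix:
  "U'_point F z t v* U'_to_U_matrix =
     U_point F (z + t + F (F (F z)) + F (F z) + F (F t)) (t + F (F (F z)) + F (F t) + F (F (F t)))"
  by (simp add: U_point_def U'_point_def U'_to_U_matrix_def vec_eq_iff forall_4
      vector_matrix_mult_def sum_4 char_2_simps)

lemma image_U_point_U_to_U'_matrix:
  "(\<lambda>u. u v* U_to_U'_matrix) ` {U_point F x y | x y. True} = {U'_point F z t | z t. True}"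
proof
  show "(\<lambda>u. u v* U_to_U'_matrix) ` {U_point F x y | x y. True} \<subseteq> {U'_point F z t | z t. True}"
    using U_point_times_U_to_U'_matrix by blast
next
  show "{U'_point F z t | z t. True} \<subseteq> (\<lambda>u. u v* U_to_U'_matrix) ` {U_point F x y | x y. True}"
  proof clarify
    fix z t
    have "U'_point F z t = (U'_point F z t v* U'_to_U_matrix) v* U_to_U'_matrix"
      by (simp add: vector_matrix_mul_assoc U_to_U'_matrix_inverse(2)[OF char_2])
    then show "U'_point F z t \<in> (\<lambda>u. u v* U_to_U'_matrix) ` {U_point F x y | x y. True}"
      unfolding U'_point_times_U'_to_U_matrix by blast
  qed
qed

end

theorem proposition4p6:
  fixes h :: nat and q :: nat
  assumes "odd h"
    and "q = 2 ^ h"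
    and "CARD('a::{field,finite}) = q ^ 4"
  shows "\<exists>A :: 'a ^ 4 ^ 4. invertible A \<and>
           (\<lambda>u. u v* A) ` (U_set q :: ('a ^ 4) set) = U'_set q"
proof -
  have "CARD('a) = 2 ^ (4 * h)"
    using assms(2,3) by (simp add: power_mult[symmetric] mult.commute)
  moreover have "h > 0" \<comment> \<open>the only use of the oddness of \<open>h\<close>\<close>
    using assms(1) by (cases h) auto
  ultimately have char: "CHAR('a) = 2"
    using CHAR_eq_prime_if_card_eq_power[where 'a = 'a and p = 2 and n = "4 * h"] by simp
  then have char_2: "(2::'a) = 0"
    using of_nat_CHAR[where ?'a = 'a] by simp
  have additive: "(a + b) ^ q = a ^ q + b ^ q" for a b :: 'a
    using freshmans_dream'[where ?'a = 'a and n = h] char assms(2) by simp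
  have order_4: "(((x ^ q) ^ q) ^ q) ^ q = x" for x :: 'a
    using power_card_eq_same[of x] assms(3) by (simp add: power_mult[symmetric] power4_eq_xxxx)
  show ?thesis
    using invertible_U_to_U'_matrix[OF char_2]
      image_U_point_U_to_U'_matrix[of "\<lambda>x. x ^ q", OF char_2 additive order_4]
    unfolding U_set_eq_range_U_point U'_set_eq_range_U'_point by blast
qed

end
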